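(* Define $q:\mathbb R_+\times\mathbb R^4\times\mathbb R^4\to\mathbb R$ by $$q(\Sigma,\mathbf a,\boldsymbol\zeta)=\nu a_1+\frac12a_2(\sigma^2-\Sigma^2)+\sigma\eta a_3+\frac12(\eta^2+\xi)a_4,$$ where $\mathbf a=(a_1,a_2,a_3,a_4)^\top$ and $\boldsymbol\zeta=(\nu,\sigma,\eta,\xi)^\top$. Then for all $\Sigma\in\mathbb R_+$, $\mathbf a\in\mathbb R^4$, $\boldsymbol\zeta\in\mathbb R^4$, $$|q(\Sigma,\mathbf a,\boldsymbol\zeta)|\le\max(1,\Sigma)\|\mathbf a\|\,\|\boldsymbol\zeta-\boldsymbol\zeta^0(\Sigma)\|+\|\mathbf a\|\,\|\boldsymbol\zeta-\boldsymbol\zeta^0(\Sigma)\|^2.$$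
   Context: $\boldsymbol\zeta^0(\Sigma)=(0,\Sigma,0,0)^\top$ and $\|\cdot\|$ denotes the Euclidean norm on $\mathbb R^4$. *)

theory Defs
  imports "HOL-Analysis.Analysis"
begin

definition zeta0 :: "real \<Rightarrow> real^4" where
  "zeta0 S = vector [0, S, 0, 0]"

definition q :: "real \<Rightarrow> real^4 \<Rightarrow> real^4 \<Rightarrow> real" where
  "q S a z = (let \<nu> = z$1; \<sigma> = z$2; \<eta> = z$3; \<xi> = z$4 in
     \<nu> * a$1 + (1/2) * a$2 * (\<sigma>^2 - S^2) + \<sigma> * \<eta> * a$3 + (1/2) * (\<eta>^2 + \<xi>) * a$4)"

end

theory Submission
  imports Defs
begin

text \<open>Expanding \<open>q\<close> around \<open>\<zeta>\<^sup>0(\<Sigma>)\<close> with \<open>d = \<zeta> - \<zeta>\<^sup>0(\<Sigma>)\<close> gives a part linear in \<open>d\<close>,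
  namely \<open>\<langle>b, d\<rangle>\<close> with \<open>b = (a\<^sub>1, \<Sigma>a\<^sub>2, \<Sigma>a\<^sub>3, a\<^sub>4/2)\<close>, plus the quadratic form
  \<open>a\<^sub>2d\<^sub>2\<^sup>2/2 + a\<^sub>3d\<^sub>2d\<^sub>3 + a\<^sub>4d\<^sub>3\<^sup>2/2\<close>. Cauchy--Schwarz with \<open>\<parallel>b\<parallel> \<le> max(1,\<Sigma>)\<parallel>a\<parallel>\<close> bounds the
  first, and \<open>|a\<^sub>i| \<le> \<parallel>a\<parallel>\<close> together with \<open>2|d\<^sub>2d\<^sub>3| \<le> d\<^sub>2\<^sup>2 + d\<^sub>3\<^sup>2\<close> bounds the second.\<close>

lemma vector_4_nth:
  "(vector [x, y, z, w] :: ('a::zero)^4) $ 1 = x"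
  "(vector [x, y, z, w] :: ('a::zero)^4) $ 2 = y"
  "(vector [x, y, z, w] :: ('a::zero)^4) $ 3 = z"
  "(vector [x, y, z, w] :: ('a::zero)^4) $ 4 = w"
  unfolding vector_def by simp_all

lemma norm_power2_vec4: "(norm (x :: real^4))\<^sup>2 = (x$1)\<^sup>2 + (x$2)\<^sup>2 + (x$3)\<^sup>2 + (x$4)\<^sup>2"
  by (simp add: norm_vec_def L2_set_def sum_4 sum_nonneg)

lemma inner_vec4: "inner (x :: real^4) y = x$1 * y$1 + x$2 * y$2 + x$3 * y$3 + x$4 * y$4"
  by (simp add: inner_vec_def sum_4)

definition q_linear_coeffs :: "real \<Rightarrow> real^4 \<Rightarrow> real^4" where
  "q_linear_coeffs S a = vector [a$1, S * a$2, S * a$3, a$4 / 2]"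

definition q_quadratic_part :: "real^4 \<Rightarrow> real^4 \<Rightarrow> real" where
  "q_quadratic_part a d = a$2 * (d$2)\<^sup>2 / 2 + a$3 * d$2 * d$3 + a$4 * (d$3)\<^sup>2 / 2"

lemma q_expansion_at_zeta0:
  "q S a z = inner (q_linear_coeffs S a) (z - zeta0 S) + q_quadratic_part a (z - zeta0 S)"
  unfolding q_def Let_def q_linear_coeffs_def q_quadratic_part_def zeta0_def inner_vec4
  by (simp add: vector_4_nth field_simps power2_eq_square)

lemma norm_q_linear_coeffs_le:
  assumes "0 \<le> S"
  shows "norm (q_linear_coeffs S a) \<le> max 1 S * norm a"
proof (rule power2_le_imp_le)
  let ?M = "max 1 S"
  have M1: "1 \<le> ?M\<^sup>2" and MS: "S\<^sup>2 \<le> ?M\<^sup>2"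
    using assms by (auto intro: power_mono simp: one_le_power)
  have "c \<le> ?M\<^sup>2 * c" if "0 \<le> c" for c
    using mult_right_mono[OF M1 that] by simp
  then have "(a$1)\<^sup>2 \<le> ?M\<^sup>2 * (a$1)\<^sup>2" "(a$4)\<^sup>2 \<le> ?M\<^sup>2 * (a$4)\<^sup>2"
    by simp_all
  moreover have "S\<^sup>2 * (a$2)\<^sup>2 \<le> ?M\<^sup>2 * (a$2)\<^sup>2" "S\<^sup>2 * (a$3)\<^sup>2 \<le> ?M\<^sup>2 * (a$3)\<^sup>2"
    using MS by (simp_all add: mult_right_mono)
  moreover have "0 \<le> (a$4)\<^sup>2" by simp
  moreover have "(norm (q_linear_coeffs S a))\<^sup>2 = (a$1)\<^sup>2 + S\<^sup>2 * (a$2)\<^sup>2 + S\<^sup>2 * (a$3)\<^sup>2 + (a$4)\<^sup>2 / 4"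
    by (simp add: q_linear_coeffs_def norm_power2_vec4 vector_4_nth power_mult_distrib power_divide)
  moreover have "(?M * norm a)\<^sup>2 = ?M\<^sup>2 * (a$1)\<^sup>2 + ?M\<^sup>2 * (a$2)\<^sup>2 + ?M\<^sup>2 * (a$3)\<^sup>2 + ?M\<^sup>2 * (a$4)\<^sup>2"
    by (simp add: power_mult_distrib norm_power2_vec4 algebra_simps)
  ultimately show "(norm (q_linear_coeffs S a))\<^sup>2 \<le> (?M * norm a)\<^sup>2"
    by linarith
qed simp

lemma abs_binary_quadratic_form_le:
  fixes A b c e x y :: real
  assumes "\<bar>b\<bar> \<le> A" "\<bar>c\<bar> \<le> A" "\<bar>e\<bar> \<le> A"
  shows "\<bar>b * x\<^sup>2 / 2 + c * x * y + e * y\<^sup>2 / 2\<bar> \<le> A * (x\<^sup>2 + y\<^sup>2)"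
proof -
  have "\<bar>b * x\<^sup>2 / 2 + c * x * y + e * y\<^sup>2 / 2\<bar> \<le> \<bar>b\<bar> * x\<^sup>2 / 2 + \<bar>c\<bar> * \<bar>x * y\<bar> + \<bar>e\<bar> * y\<^sup>2 / 2"
    by (rule order_trans[OF abs_triangle_ineq]) (auto simp: abs_mult intro: order_trans[OF abs_triangle_ineq])
  also have "\<dots> \<le> A * x\<^sup>2 / 2 + A * \<bar>x * y\<bar> + A * y\<^sup>2 / 2"
    using assms by (intro add_mono divide_right_mono mult_right_mono) auto
  also have "\<dots> \<le> A * (x\<^sup>2 + y\<^sup>2)"
  proof -
    have "\<bar>x * y\<bar> \<le> (x\<^sup>2 + y\<^sup>2) / 2"
      using sum_squares_bound[of "\<bar>x\<bar>" "\<bar>y\<bar>"] by (simp add: abs_mult)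
    moreover have "0 \<le> A" using assms(1) by linarith
    ultimately have "A * \<bar>x * y\<bar> \<le> A * ((x\<^sup>2 + y\<^sup>2) / 2)" by (rule mult_left_mono)
    then show ?thesis by (simp add: algebra_simps)
  qed
  finally show ?thesis .
qed

lemma abs_q_quadratic_part_le: "\<bar>q_quadratic_part a d\<bar> \<le> norm a * (norm d)\<^sup>2"
proof -
  have "\<bar>q_quadratic_part a d\<bar> \<le> norm a * ((d$2)\<^sup>2 + (d$3)\<^sup>2)"
    unfolding q_quadratic_part_def
    by (intro abs_binary_quadratic_form_le component_le_norm_cart)
  also have "\<dots> \<le> norm a * (norm d)\<^sup>2"
    by (intro mult_left_mono) (simp_all add: norm_power2_vec4)
  finally show ?thesis .
qed

theorem lemma5p4:
  fixes S :: real and a z :: "real^4"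
  assumes "S > 0"
  shows "\<bar>q S a z\<bar> \<le> max 1 S * norm a * norm (z - zeta0 S) + norm a * (norm (z - zeta0 S))^2"
proof -
  define d where "d = z - zeta0 S"
  have "\<bar>inner (q_linear_coeffs S a) d\<bar> \<le> max 1 S * norm a * norm d"
    using Cauchy_Schwarz_ineq2[of "q_linear_coeffs S a" d]
      mult_right_mono[OF norm_q_linear_coeffs_le[of S a] norm_ge_zero[of d]] assms
    by linarith
  then show ?thesis
    using q_expansion_at_zeta0[of S a z] abs_q_quadratic_part_le[of a d]
      abs_triangle_ineq[of "inner (q_linear_coeffs S a) d" "q_quadratic_part a d"]
    unfolding d_def by linarith
qed

end
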